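(* Let $G$ be a fair complete tripartite graph on an even number of vertices whose edges are coloured red and blue. Then there are two vertex-disjoint connected matchings of distinct colours (one red, one blue) that together cover all vertices of $G$.
   Context: A complete tripartite graph has three non-empty partition classes; it is fair if no partition class contains more than half of the vertices. The edge colouring is an arbitrary red/blue assignment. A monochromatic matching is called connected if all its edges lie in a single connected component of the subgraph formed by the edges of that colour. Matchings may be empty. *)

theory Defs
  imports Main
begin

definition tripartite_edges :: "'a set \<Rightarrow> 'a set \<Rightarrow> 'a set \<Rightarrow> 'a set set" where
  "tripartite_edges A B C =
     {{u, v} | u v. (u \<in> A \<and> v \<in> B) \<or> (u \<in> B \<and> v \<in> C) \<or> (u \<in> A \<and> v \<in> C)}"

definition fair_tripartite :: "'a set \<Rightarrow> 'a set \<Rightarrow> 'a set \<Rightarrow> bool" where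
  "fair_tripartite A B C \<longleftrightarrow>
     finite A \<and> finite B \<and> finite C \<and>
     A \<noteq> {} \<and> B \<noteq> {} \<and> C \<noteq> {} \<and>
     A \<inter> B = {} \<and> B \<inter> C = {} \<and> A \<inter> C = {} \<and>
     2 * card A \<le> card (A \<union> B \<union> C) \<and>
     2 * card B \<le> card (A \<union> B \<union> C) \<and>
     2 * card C \<le> card (A \<union> B \<union> C)"

text \<open>Edges of a given colour (colouring: edge \<Rightarrow> bool, True = red, False = blue).\<close>
definition colour_class :: "'a set set \<Rightarrow> ('a set \<Rightarrow> bool) \<Rightarrow> bool \<Rightarrow> 'a set set" where
  "colour_class E col c = {e \<in> E. col e = c}"

definition adj :: "'a set set \<Rightarrow> 'a \<Rightarrow> 'a \<Rightarrow> bool" where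
  "adj F u v \<longleftrightarrow> {u, v} \<in> F \<and> u \<noteq> v"

definition matching :: "'a set set \<Rightarrow> 'a set set \<Rightarrow> bool" where
  "matching F M \<longleftrightarrow> M \<subseteq> F \<and> (\<forall>e\<in>M. \<forall>e'\<in>M. e \<noteq> e' \<longrightarrow> e \<inter> e' = {})"

definition connected_matching :: "'a set set \<Rightarrow> 'a set set \<Rightarrow> bool" where
  "connected_matching F M \<longleftrightarrow> matching F M \<and>
     (\<forall>e\<in>M. \<forall>e'\<in>M. \<forall>u\<in>e. \<forall>v\<in>e'. (adj F)\<^sup>*\<^sup>* u v)"

end

theory Submission
  imports Defs
begin

(* We prove this for complete multipartite graphs in general: a vertex set V, a
   part function, and an edge between any two vertices of different parts.
   (1) If V is finite, |V| is even and no part has more than |V|/2 vertices, a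
       perfect matching exists: sort V by part and match position i with
       position i + |V|/2.
   (2) If at least three parts occur, then for every colour c either all c-edges
       lie in a single c-component, or all vertices lie in a single component of
       the other colour.  So some colour is confined to one component.
   (3) In a perfect matching with the fewest edges of colour d, any two d-edges
       lie in the same d-component: otherwise their four endpoints can be
       re-paired by two edges joining different d-components; these edges have
       the other colour, contradicting minimality.
   If colour c is confined to one component, splitting a matching from (3) with
   d = not c by colour gives the two matchings.  The tripartite theorem is the
   special case of three parts. *)

abbreviation linked :: "'a set set \<Rightarrow> 'a \<Rightarrow> 'a \<Rightarrow> bool" where
  "linked F \<equiv> (adj F)\<^sup>*\<^sup>*"

lemma adj_sym: "adj F u v \<Longrightarrow> adj F v u"
  by (auto simp: adj_def insert_commute)

lemma linked_sym: "linked F u v \<Longrightarrow> linked F v u"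
  by (induction rule: rtranclp_induct) (auto intro: converse_rtranclp_into_rtranclp adj_sym)

(* All edges of F lie in one connected component of F; then every matching
   inside F is a connected matching. *)
definition single_component :: "'a set set \<Rightarrow> bool" where
  "single_component F \<longleftrightarrow> (\<forall>e\<in>F. \<forall>e'\<in>F. \<forall>u\<in>e. \<forall>v\<in>e'. linked F u v)"

definition perfect_matching :: "'a set \<Rightarrow> 'a set set \<Rightarrow> 'a set set \<Rightarrow> bool" where
  "perfect_matching V F M \<longleftrightarrow> matching F M \<and> \<Union>M = V"

lemma perfect_matchingD:
  assumes "perfect_matching V F M"
  shows "M \<subseteq> F" "\<Union>M = V" "\<And>e e'. e \<in> M \<Longrightarrow> e' \<in> M \<Longrightarrow> e \<noteq> e' \<Longrightarrow> e \<inter> e' = {}"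
  using assms by (auto simp: perfect_matching_def matching_def)

lemma perfect_matchingI:
  assumes "M \<subseteq> F" "\<And>e e'. e \<in> M \<Longrightarrow> e' \<in> M \<Longrightarrow> e \<noteq> e' \<Longrightarrow> e \<inter> e' = {}" "\<Union>M = V"
  shows "perfect_matching V F M"
  using assms by (auto simp: perfect_matching_def matching_def)

(* Every edge of a perfect matching is a subset of V, so there are finitely many. *)
lemma perfect_matching_finite:
  assumes "finite V" "perfect_matching V F M" shows "finite M"
proof -
  have "M \<subseteq> Pow V" using perfect_matchingD(2)[OF assms(2)] by auto
  then show ?thesis using assms(1) finite_subset by blast
qed

lemma perfect_matching_exchange:
  assumes M: "perfect_matching V F M" and e: "e1 \<in> M" "e2 \<in> M" "e1 \<noteq> e2"
    and f: "f1 \<in> F" "f2 \<in> F" "f1 \<inter> f2 = {}" "f1 \<union> f2 = e1 \<union> e2"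
  shows "perfect_matching V F (M - {e1, e2} \<union> {f1, f2})"
proof -
  note disj = perfect_matchingD(3)[OF M]
  have old_new: "g \<inter> f = {}" if "g \<in> M - {e1, e2}" "f \<in> {f1, f2}" for g f
    using disj[of g e1] disj[of g e2] that e f(4) by auto
  show ?thesis
  proof (rule perfect_matchingI)
    show "M - {e1, e2} \<union> {f1, f2} \<subseteq> F"
      using perfect_matchingD(1)[OF M] f(1,2) by blast
    show "g \<inter> g' = {}"
      if "g \<in> M - {e1, e2} \<union> {f1, f2}" "g' \<in> M - {e1, e2} \<union> {f1, f2}" "g \<noteq> g'" for g g'
      using that disj old_new[of g g'] old_new[of g' g] f(3) by blast
    show "\<Union>(M - {e1, e2} \<union> {f1, f2}) = V"
      using e f(4) perfect_matchingD(2)[OF M] by blast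
  qed
qed

lemma matching_colour_part:
  "matching F M \<Longrightarrow> matching (colour_class F col c) {e \<in> M. col e = c}"
  by (auto simp: matching_def colour_class_def)

definition multipartite_edges :: "'a set \<Rightarrow> ('a \<Rightarrow> 'p) \<Rightarrow> 'a set set" where
  "multipartite_edges V part = {{x, y} | x y. x \<in> V \<and> y \<in> V \<and> part x \<noteq> part y}"

lemma multipartite_edgeI:
  "x \<in> V \<Longrightarrow> y \<in> V \<Longrightarrow> part x \<noteq> part y \<Longrightarrow> {x, y} \<in> multipartite_edges V part"
  unfolding multipartite_edges_def by blast

lemma multipartite_edgeE:
  assumes "e \<in> multipartite_edges V part" "u \<in> e"
  obtains v where "e = {u, v}" "u \<in> V" "v \<in> V" "part u \<noteq> part v"
proof -
  obtain x y where "e = {x, y}" "x \<in> V" "y \<in> V" "part x \<noteq> part y"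
    using assms(1) unfolding multipartite_edges_def by blast
  then show thesis
    using that assms(2) by (metis insert_commute insert_iff singletonD)
qed

lemma multipartite_pair_iff:
  "{x, y} \<in> multipartite_edges V part \<longleftrightarrow> x \<in> V \<and> y \<in> V \<and> part x \<noteq> part y"
proof
  assume "{x, y} \<in> multipartite_edges V part"
  then obtain v where "{x, y} = {x, v}" "x \<in> V" "v \<in> V" "part x \<noteq> part v"
    by (auto elim: multipartite_edgeE)
  then show "x \<in> V \<and> y \<in> V \<and> part x \<noteq> part y"
    by (metis doubleton_eq_iff)
qed (rule multipartite_edgeI; blast)

lemma multipartite_recombine:
  assumes "{u, y1} \<in> multipartite_edges V part" "{v, y2} \<in> multipartite_edges V part"
  obtains a b where "{a, b} = {v, y2}"
    "{u, a} \<in> multipartite_edges V part" "{y1, b} \<in> multipartite_edges V part"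
proof (cases "part u \<noteq> part v \<and> part y1 \<noteq> part y2")
  case True
  then show thesis
    using assms that[of v y2] by (simp add: multipartite_pair_iff)
next
  case False
  then show thesis
    using assms that[of y2 v] by (auto simp: multipartite_pair_iff insert_commute)
qed

lemma multipartite_edge_subset: "e \<in> multipartite_edges V part \<Longrightarrow> e \<subseteq> V"
  unfolding multipartite_edges_def by blast

(* If the vertices are listed sorted by part, positions
   i and i + h (h = |V|/2) cannot lie in the same part, since the h + 1 vertices
   in between would all belong to it. *)
lemma multipartite_perfect_matching:
  fixes part :: "'a \<Rightarrow> 'p::linorder"
  assumes fin: "finite V" and even: "even (card V)"
    and balanced: "\<And>k. 2 * card {x \<in> V. part x = k} \<le> card V"
  shows "\<exists>M. perfect_matching V (multipartite_edges V part) M"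
proof -
  obtain xs0 where xs0: "set xs0 = V" "distinct xs0"
    using finite_distinct_list[OF fin] by blast
  define xs where "xs = sort_key part xs0"
  define h where "h = card V div 2"
  have set_xs: "set xs = V" and dist: "distinct xs" and sorted: "sorted (map part xs)"
    using xs0 by (simp_all add: xs_def)
  have card_V: "card V = 2 * h"
    unfolding h_def using even by simp
  have len: "length xs = 2 * h"
    using distinct_card[OF dist] set_xs card_V by simp
  have in_V: "xs ! k \<in> V" if "k < 2 * h" for k
    using that len set_xs nth_mem by metis
  have nth_inj: "xs ! k = xs ! l \<longleftrightarrow> k = l" if "k < 2 * h" "l < 2 * h" for k l
    using that len nth_eq_iff_index_eq[OF dist] by simp
  have opposite: "part (xs ! i) \<noteq> part (xs ! (i + h))" if i: "i < h" for i
  proof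
    assume same: "part (xs ! i) = part (xs ! (i + h))"
    let ?class = "{x \<in> V. part x = part (xs ! i)}"
    have same_part: "part (xs ! j) = part (xs ! i)" if "i \<le> j" "j \<le> i + h" for j
    proof -
      have "part (xs ! i) \<le> part (xs ! j)" "part (xs ! j) \<le> part (xs ! (i + h))"
        using sorted_nth_mono[OF sorted, of i j] sorted_nth_mono[OF sorted, of j "i + h"] that i len
        by simp_all
      then show ?thesis using same by simp
    qed
    have sub: "(!) xs ` {i..i + h} \<subseteq> ?class"
    proof (rule image_subsetI)
      fix j assume "j \<in> {i..i + h}"
      then show "xs ! j \<in> ?class"
        using same_part[of j] in_V[of j] i by auto
    qed
    have inj: "inj_on ((!) xs) {i..i + h}"
      using i nth_inj by (auto simp: inj_on_def)
    have "card {i..i + h} \<le> card ?class"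
      using card_mono[OF _ sub] card_image[OF inj] fin by simp
    moreover have "card {i..i + h} = h + 1"
      by simp
    ultimately show False
      using balanced[of "part (xs ! i)"] card_V by linarith
  qed
  define M where "M = (\<lambda>i. {xs ! i, xs ! (i + h)}) ` {..<h}"
  show ?thesis
  proof (rule exI, rule perfect_matchingI)
    show "M \<subseteq> multipartite_edges V part"
      using opposite in_V by (auto simp: M_def intro!: multipartite_edgeI)
    show "e \<inter> e' = {}" if e: "e \<in> M" "e' \<in> M" "e \<noteq> e'" for e e'
    proof -
      obtain i j where "i < h" "j < h" "e = {xs ! i, xs ! (i + h)}" "e' = {xs ! j, xs ! (j + h)}"
        using e(1,2) by (auto simp: M_def)
      moreover have "i \<noteq> j"
        using e(3) calculation by blast
      ultimately show ?thesis
        using nth_inj by auto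
    qed
    show "\<Union>M = V"
    proof
      show "\<Union>M \<subseteq> V"
        using in_V by (auto simp: M_def)
      show "V \<subseteq> \<Union>M"
      proof
        fix x assume "x \<in> V"
        then obtain k where k: "k < 2 * h" "x = xs ! k"
          using set_xs len by (metis in_set_conv_nth)
        then consider "k < h" | "k - h < h" "k - h + h = k"
          by linarith
        then show "x \<in> \<Union>M"
        proof cases
          case 1
          then show ?thesis using k unfolding M_def by blast
        next
          case 2
          then have "x \<in> {xs ! (k - h), xs ! (k - h + h)}"
            using k by simp
          then show ?thesis using 2 unfolding M_def by blast
        qed
      qed
    qed
  qed
qed

context
  fixes V :: "'a set" and part :: "'a \<Rightarrow> 'p" and col :: "'a set \<Rightarrow> bool"
begin

abbreviation coloured :: "bool \<Rightarrow> 'a set set" where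
  "coloured c \<equiv> colour_class (multipartite_edges V part) col c"

abbreviation joined :: "bool \<Rightarrow> 'a \<Rightarrow> 'a \<Rightarrow> bool" where
  "joined c \<equiv> linked (coloured c)"

lemma joined_by_edge:
  assumes "x \<in> V" "y \<in> V" "part x \<noteq> part y" "col {x, y} = c"
  shows "joined c x y"
proof -
  have "{x, y} \<in> coloured c" "x \<noteq> y"
    using assms multipartite_edgeI[of x V y part] by (auto simp: colour_class_def)
  then show ?thesis by (auto simp: adj_def)
qed

lemma colour_forced:
  assumes "x \<in> V" "y \<in> V" "part x \<noteq> part y" "\<not> joined c x y"
  shows "col {x, y} = (\<not> c)"
  using assms joined_by_edge by blast

lemma joined_other_colour:
  assumes "x \<in> V" "y \<in> V" "part x \<noteq> part y" "\<not> joined c x y"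
  shows "joined (\<not> c) x y"
  using assms by (intro joined_by_edge colour_forced)

(* If a c-edge pq lies in one component of the other colour, then every vertex
   outside the c-component of p joins that component (it differs in part from p
   or from q). *)
lemma joined_other_near_edge:
  assumes V: "x \<in> V" "p \<in> V" "q \<in> V" and pq: "part p \<noteq> part q" "joined c p q" "joined (\<not> c) p q"
    and x: "\<not> joined c x p"
  shows "joined (\<not> c) x p"
proof (cases "part x = part p")
  case True
  have "\<not> joined c x q"
    using x pq(2) linked_sym rtranclp_trans by metis
  then have "joined (\<not> c) x q"
    using True pq(1) V by (intro joined_other_colour) auto
  then show ?thesis
    using pq(3) linked_sym rtranclp_trans by metis
qed (use V x joined_other_colour in auto)

(* Take w
   outside the parts of p and q; if w is not c-joined to p it is adjacent to both
   in the other colour, otherwise r and s are adjacent in the other colour to all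
   of p, q, w outside their own parts, which connects p and q. *)
lemma other_colour_joins_edge:
  assumes three_parts: "\<And>i j. \<exists>w\<in>V. part w \<noteq> i \<and> part w \<noteq> j"
    and V: "p \<in> V" "q \<in> V" "r \<in> V" "s \<in> V"
    and parts: "part p \<noteq> part q" "part r \<noteq> part s"
    and edges: "joined c p q" "joined c r s" and apart: "\<not> joined c p r"
  shows "joined (\<not> c) p q"
proof -
  have trans: "joined d x z" if "joined d x y" "joined d y z" for d x y z
    using that by (rule rtranclp_trans)
  have sym: "joined d y x" if "joined d x y" for d x y
    using that by (rule linked_sym)
  obtain w where w: "w \<in> V" "part w \<noteq> part p" "part w \<noteq> part q"
    using three_parts by blast
  show ?thesis
  proof (cases "joined c w p")
    case False
    then have "\<not> joined c w q"
      using edges(1) trans sym by metis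
    then have "joined (\<not> c) w p" "joined (\<not> c) w q"
      using False w V joined_other_colour by auto
    then show ?thesis using trans sym by metis
  next
    case True
    have cross: "joined (\<not> c) t y"
      if "t \<in> {r, s}" "y \<in> {p, q, w}" "part t \<noteq> part y" for t y
    proof -
      have "joined c y p" using that(2) True edges(1) sym by auto
      moreover have "joined c t r" using that(1) edges(2) sym by auto
      ultimately have "\<not> joined c t y" using apart trans sym by metis
      then show ?thesis using that V w joined_other_colour by auto
    qed
    consider "part r = part p" | "part r = part q" | "part r \<noteq> part p" "part r \<noteq> part q"
      by blast
    then show ?thesis
    proof cases
      case 1
      then have "joined (\<not> c) r q" "joined (\<not> c) r w" "joined (\<not> c) s p"
        using cross parts w by auto
      moreover have "joined (\<not> c) s q \<or> joined (\<not> c) s w"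
        using cross[of s q] cross[of s p] cross[of s w] w by (cases "part s = part w") auto
      ultimately show ?thesis using trans sym by metis
    next
      case 2
      then have "joined (\<not> c) r p" "joined (\<not> c) r w" "joined (\<not> c) s q"
        using cross parts w by auto
      moreover have "joined (\<not> c) s p \<or> joined (\<not> c) s w"
        using cross[of s q] cross[of s p] cross[of s w] w by (cases "part s = part w") auto
      ultimately show ?thesis using trans sym by metis
    next
      case 3
      then have "joined (\<not> c) r p" "joined (\<not> c) r q"
        using cross by auto
      then show ?thesis using trans sym by metis
    qed
  qed
qed

(* Under the same hypotheses all vertices lie in the other-colour component of p:
   every vertex misses the c-component of p or that of r. *)
lemma other_colour_spans:
  assumes three_parts: "\<And>i j. \<exists>w\<in>V. part w \<noteq> i \<and> part w \<noteq> j"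
    and V: "p \<in> V" "q \<in> V" "r \<in> V" "s \<in> V"
    and parts: "part p \<noteq> part q" "part r \<noteq> part s"
    and edges: "joined c p q" "joined c r s" and apart: "\<not> joined c p r"
    and x: "x \<in> V"
  shows "joined (\<not> c) x p"
proof -
  have apart': "\<not> joined c r p"
    using apart linked_sym by metis
  have pq: "joined (\<not> c) p q"
    using other_colour_joins_edge[OF three_parts V parts edges apart] .
  have rs: "joined (\<not> c) r s"
    using other_colour_joins_edge[OF three_parts V(3,4,1,2) parts(2,1) edges(2,1) apart'] .
  have rp: "joined (\<not> c) r p"
    using joined_other_near_edge[OF V(3,1,2) parts(1) edges(1) pq apart'] .
  show ?thesis
  proof (cases "joined c x p")
    case True
    then have "\<not> joined c x r"
      using apart linked_sym rtranclp_trans by metis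
    then have "joined (\<not> c) x r"
      using joined_other_near_edge[OF x V(3,4) parts(2) edges(2) rs] by blast
    then show ?thesis
      using rp by (rule rtranclp_trans)
  next
    case False
    then show ?thesis
      using joined_other_near_edge[OF x V(1,2) parts(1) edges(1) pq] by blast
  qed
qed

lemma some_colour_single_component:
  assumes three_parts: "\<And>i j. \<exists>w\<in>V. part w \<noteq> i \<and> part w \<noteq> j"
  shows "single_component (coloured c) \<or> single_component (coloured (\<not> c))"
proof (cases "single_component (coloured c)")
  case False
  then obtain e e' u v where e: "e \<in> coloured c" "e' \<in> coloured c" "u \<in> e" "v \<in> e'"
    and apart: "\<not> joined c u v"
    unfolding single_component_def by blast
  obtain q where q: "e = {u, q}" "u \<in> V" "q \<in> V" "part u \<noteq> part q"
    using e(1,3) by (auto simp: colour_class_def elim: multipartite_edgeE)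
  obtain s where s: "e' = {v, s}" "v \<in> V" "s \<in> V" "part v \<noteq> part s"
    using e(2,4) by (auto simp: colour_class_def elim: multipartite_edgeE)
  have "col {u, q} = c" "col {v, s} = c"
    using e q s by (auto simp: colour_class_def)
  then have "joined c u q" "joined c v s"
    using q s by (auto intro: joined_by_edge)
  then have spans: "joined (\<not> c) x u" if "x \<in> V" for x
    using other_colour_spans[OF three_parts] q s apart that by blast
  have "single_component (coloured (\<not> c))"
    unfolding single_component_def
  proof (intro ballI)
    fix f f' x y assume "f \<in> coloured (\<not> c)" "f' \<in> coloured (\<not> c)" "x \<in> f" "y \<in> f'"
    then have "x \<in> V" "y \<in> V"
      by (auto simp: colour_class_def dest: multipartite_edge_subset)
    then show "joined (\<not> c) x y"
      using spans linked_sym rtranclp_trans by metis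
  qed
  then show ?thesis ..
qed simp

lemma fewer_edges_of_colour:
  assumes fin: "finite V" and M: "perfect_matching V (multipartite_edges V part) M"
    and e: "e1 \<in> M" "e2 \<in> M" "col e1 = d" "col e2 = d" "u \<in> e1" "v \<in> e2"
    and apart: "\<not> joined d u v"
  shows "\<exists>M'. perfect_matching V (multipartite_edges V part) M' \<and>
           card {e \<in> M'. col e = d} < card {e \<in> M. col e = d}"
proof -
  let ?E = "multipartite_edges V part"
  note ME = perfect_matchingD(1)[OF M] and disj = perfect_matchingD(3)[OF M]
  have "e1 \<in> ?E" "e2 \<in> ?E"
    using ME e(1,2) by auto
  obtain y1 where y1: "e1 = {u, y1}" "u \<in> V" "y1 \<in> V" "part u \<noteq> part y1"
    using \<open>e1 \<in> ?E\<close> e(5) by (rule multipartite_edgeE)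
  obtain y2 where y2: "e2 = {v, y2}" "v \<in> V" "y2 \<in> V" "part v \<noteq> part y2"
    using \<open>e2 \<in> ?E\<close> e(6) by (rule multipartite_edgeE)
  have edges: "joined d u y1" "joined d v y2"
    using y1 y2 e(3,4) by (auto intro: joined_by_edge)
  have far: "\<not> joined d x y" if "x \<in> e1" "y \<in> e2" for x y
  proof
    assume "joined d x y"
    moreover have "joined d u x" "joined d y v"
      using that y1(1) y2(1) edges linked_sym by auto
    ultimately show False
      using apart rtranclp_trans by metis
  qed
  have "e1 \<noteq> e2"
    using far[of u u] e(5) by auto
  then have e12: "e1 \<inter> e2 = {}"
    using disj e(1,2) by blast
  obtain a b where ab: "{a, b} = {v, y2}" and f: "{u, a} \<in> ?E" "{y1, b} \<in> ?E"
    using \<open>e1 \<in> ?E\<close> \<open>e2 \<in> ?E\<close> unfolding y1(1) y2(1) by (rule multipartite_recombine)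
  have "a \<in> e2" "b \<in> e2"
    using ab y2(1) by auto
  then have "\<not> joined d u a" "\<not> joined d y1 b"
    using far y1(1) by auto
  then have recoloured: "col {u, a} = (\<not> d)" "col {y1, b} = (\<not> d)"
    using f colour_forced unfolding multipartite_pair_iff by blast+
  have new: "{u, a} \<inter> {y1, b} = {}" "{u, a} \<union> {y1, b} = e1 \<union> e2"
    using ab e12 y1 y2 by (auto simp: doubleton_eq_iff)
  define M' where "M' = M - {e1, e2} \<union> {{u, a}, {y1, b}}"
  have "perfect_matching V ?E M'"
    unfolding M'_def using perfect_matching_exchange[OF M e(1,2) \<open>e1 \<noteq> e2\<close> f new] .
  moreover have "{e \<in> M'. col e = d} \<subseteq> {e \<in> M. col e = d} - {e1}"
    using recoloured unfolding M'_def by auto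
  then have "{e \<in> M'. col e = d} \<subset> {e \<in> M. col e = d}"
    using e(1,3) by blast
  then have "card {e \<in> M'. col e = d} < card {e \<in> M. col e = d}"
    using perfect_matching_finite[OF fin M] by (auto intro: psubset_card_mono)
  ultimately show ?thesis by blast
qed

lemma matching_with_joined_colour:
  assumes fin: "finite V" and M0: "perfect_matching V (multipartite_edges V part) M0"
  shows "\<exists>M. perfect_matching V (multipartite_edges V part) M \<and>
           (\<forall>e\<in>M. \<forall>e'\<in>M. col e = d \<longrightarrow> col e' = d \<longrightarrow> (\<forall>u\<in>e. \<forall>v\<in>e'. joined d u v))"
proof -
  let ?pm = "perfect_matching V (multipartite_edges V part)"
  obtain M where M: "?pm M"
    and least: "\<And>M'. ?pm M' \<Longrightarrow> card {e \<in> M. col e = d} \<le> card {e \<in> M'. col e = d}"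
    using ex_has_least_nat[of ?pm M0 "\<lambda>M. card {e \<in> M. col e = d}"] M0 by blast
  have "joined d u v"
    if hyps: "e \<in> M" "e' \<in> M" "col e = d" "col e' = d" "u \<in> e" "v \<in> e'" for e e' u v
  proof (rule ccontr)
    assume "\<not> joined d u v"
    then obtain M' where "?pm M'" "card {e \<in> M'. col e = d} < card {e \<in> M. col e = d}"
      using fewer_edges_of_colour[OF fin M hyps] by blast
    then show False
      using least[of M'] by simp
  qed
  then show ?thesis
    using M by blast
qed

lemma split_by_colour:
  assumes fin: "finite V" and M0: "perfect_matching V (multipartite_edges V part) M0"
    and single: "single_component (coloured c)"
  shows "\<exists>R S. connected_matching (coloured c) R \<and> connected_matching (coloured (\<not> c)) S \<and>
               \<Union>R \<inter> \<Union>S = {} \<and> \<Union>R \<union> \<Union>S = V"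
proof -
  obtain M where M: "perfect_matching V (multipartite_edges V part) M"
    and joined: "\<forall>e\<in>M. \<forall>e'\<in>M. col e = (\<not> c) \<longrightarrow> col e' = (\<not> c) \<longrightarrow>
                   (\<forall>u\<in>e. \<forall>v\<in>e'. joined (\<not> c) u v)"
    using matching_with_joined_colour[OF fin M0] by blast
  define R where "R = {e \<in> M. col e = c}"
  define S where "S = {e \<in> M. col e = (\<not> c)}"
  have "matching (coloured c) R" "matching (coloured (\<not> c)) S"
    using M matching_colour_part unfolding perfect_matching_def R_def S_def by blast+
  moreover have "R \<subseteq> coloured c"
    using \<open>matching (coloured c) R\<close> by (simp add: matching_def)
  then have "connected_matching (coloured c) R"
    using single calculation(1) unfolding connected_matching_def single_component_def by blast
  moreover have "connected_matching (coloured (\<not> c)) S"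
    using calculation(2) joined unfolding connected_matching_def S_def by blast
  moreover have "e \<inter> e' = {}" if "e \<in> R" "e' \<in> S" for e e'
  proof -
    have "e \<in> M" "e' \<in> M" "e \<noteq> e'"
      using that unfolding R_def S_def by auto
    then show ?thesis
      by (rule perfect_matchingD(3)[OF M])
  qed
  then have "\<Union>R \<inter> \<Union>S = {}"
    by blast
  moreover have "R \<union> S = M"
    unfolding R_def S_def by auto
  then have "\<Union>R \<union> \<Union>S = V"
    using perfect_matchingD(2)[OF M] by auto
  ultimately show ?thesis by blast
qed

end

theorem multipartite_red_blue_cover:
  fixes part :: "'a \<Rightarrow> 'p::linorder" and col :: "'a set \<Rightarrow> bool"
  assumes fin: "finite V" and even: "even (card V)"
    and balanced: "\<And>k. 2 * card {x \<in> V. part x = k} \<le> card V"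
    and three_parts: "\<And>i j. \<exists>w\<in>V. part w \<noteq> i \<and> part w \<noteq> j"
  shows "\<exists>R S. connected_matching (colour_class (multipartite_edges V part) col True) R \<and>
               connected_matching (colour_class (multipartite_edges V part) col False) S \<and>
               \<Union>R \<inter> \<Union>S = {} \<and> \<Union>R \<union> \<Union>S = V"
proof -
  obtain M0 where M0: "perfect_matching V (multipartite_edges V part) M0"
    using multipartite_perfect_matching[OF fin even balanced] by blast
  have "single_component (coloured V part col True) \<or> single_component (coloured V part col False)"
    using some_colour_single_component[OF three_parts, where c = True] by simp
  then show ?thesis
  proof
    assume "single_component (coloured V part col True)"
    then show ?thesis
      using split_by_colour[OF fin M0, where col = col and c = True] by simp
  next
    assume "single_component (coloured V part col False)"
    then obtain S R where "connected_matching (coloured V part col False) S"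
        "connected_matching (coloured V part col True) R" "\<Union>S \<inter> \<Union>R = {}" "\<Union>S \<union> \<Union>R = V"
      using split_by_colour[OF fin M0, where col = col and c = False] by auto
    then show ?thesis
      by blast
  qed
qed

definition tripartite_part :: "'a set \<Rightarrow> 'a set \<Rightarrow> 'a \<Rightarrow> nat" where
  "tripartite_part A B x = (if x \<in> A then 0 else if x \<in> B then 1 else 2)"

context
  fixes A B C :: "'a set"
  assumes disjoint: "A \<inter> B = {}" "B \<inter> C = {}" "A \<inter> C = {}"
begin

lemma tripartite_part_simps:
  "x \<in> A \<Longrightarrow> tripartite_part A B x = 0"
  "x \<in> B \<Longrightarrow> tripartite_part A B x = 1"
  "x \<in> C \<Longrightarrow> tripartite_part A B x = 2"
  using disjoint by (auto simp: tripartite_part_def)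

(* The parts of the tripartite numbering are the classes A, B and C, so fairness
   is the balance condition of step (1). *)
lemma tripartite_part_class:
  "{x \<in> A \<union> B \<union> C. tripartite_part A B x = k} =
     (if k = 0 then A else if k = 1 then B else if k = 2 then C else {})"
  using disjoint by (auto simp: tripartite_part_def)

lemma tripartite_as_multipartite:
  "tripartite_edges A B C = multipartite_edges (A \<union> B \<union> C) (tripartite_part A B)"
proof (intro equalityI subsetI)
  fix e assume "e \<in> tripartite_edges A B C"
  then obtain u v where "e = {u, v}" "(u \<in> A \<and> v \<in> B) \<or> (u \<in> B \<and> v \<in> C) \<or> (u \<in> A \<and> v \<in> C)"
    unfolding tripartite_edges_def by blast
  then show "e \<in> multipartite_edges (A \<union> B \<union> C) (tripartite_part A B)"
    by (auto simp: tripartite_part_simps intro!: multipartite_edgeI)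
next
  fix e assume "e \<in> multipartite_edges (A \<union> B \<union> C) (tripartite_part A B)"
  then obtain x y where e: "e = {x, y}" "x \<in> A \<union> B \<union> C" "y \<in> A \<union> B \<union> C"
      "tripartite_part A B x \<noteq> tripartite_part A B y"
    unfolding multipartite_edges_def by blast
  then have "(x \<in> A \<and> y \<in> B) \<or> (x \<in> B \<and> y \<in> C) \<or> (x \<in> A \<and> y \<in> C) \<or>
             (y \<in> A \<and> x \<in> B) \<or> (y \<in> B \<and> x \<in> C) \<or> (y \<in> A \<and> x \<in> C)"
    by (auto simp: tripartite_part_def split: if_splits)
  moreover have "{x, y} = {y, x}"
    by blast
  ultimately show "e \<in> tripartite_edges A B C"
    unfolding e(1) tripartite_edges_def by blast
qed

lemma tripartite_three_parts:
  assumes "A \<noteq> {}" "B \<noteq> {}" "C \<noteq> {}"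
  shows "\<exists>w \<in> A \<union> B \<union> C. tripartite_part A B w \<noteq> i \<and> tripartite_part A B w \<noteq> j"
proof -
  obtain a b c where abc: "a \<in> A" "b \<in> B" "c \<in> C"
    using assms by blast
  then have parts: "tripartite_part A B a = 0" "tripartite_part A B b = 1" "tripartite_part A B c = 2"
    by (simp_all add: tripartite_part_simps)
  consider "i \<noteq> 0" "j \<noteq> 0" | "i \<noteq> 1" "j \<noteq> 1" | "i \<noteq> 2" "j \<noteq> 2"
    by force
  then show ?thesis
  proof cases
    case 1
    then show ?thesis using abc(1) parts(1) by (intro bexI[of _ a]) auto
  next
    case 2
    then show ?thesis using abc(2) parts(2) by (intro bexI[of _ b]) auto
  next
    case 3
    then show ?thesis using abc(3) parts(3) by (intro bexI[of _ c]) auto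
  qed
qed

end

theorem lemma4p1:
  fixes A B C :: "'a set" and col :: "'a set \<Rightarrow> bool"
  assumes "fair_tripartite A B C"
    and "even (card (A \<union> B \<union> C))"
  shows "\<exists>R S. connected_matching (colour_class (tripartite_edges A B C) col True) R \<and>
               connected_matching (colour_class (tripartite_edges A B C) col False) S \<and>
               \<Union>R \<inter> \<Union>S = {} \<and> \<Union>R \<union> \<Union>S = A \<union> B \<union> C"
proof -
  have fin: "finite (A \<union> B \<union> C)" and nonempty: "A \<noteq> {}" "B \<noteq> {}" "C \<noteq> {}"
    and disjoint: "A \<inter> B = {}" "B \<inter> C = {}" "A \<inter> C = {}"
    using assms(1) by (auto simp: fair_tripartite_def)
  have balanced: "2 * card {x \<in> A \<union> B \<union> C. tripartite_part A B x = k} \<le> card (A \<union> B \<union> C)" for k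
    using assms(1) tripartite_part_class[OF disjoint, of k] by (simp add: fair_tripartite_def)
  show ?thesis
    unfolding tripartite_as_multipartite[OF disjoint]
    using multipartite_red_blue_cover[OF fin assms(2) balanced
        tripartite_three_parts[OF disjoint nonempty]] .
qed

end
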